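(* If $t,t'\in T^{*,\circ}$ satisfy $t=_{ALD}t'$, then $I(t)=I(t')$ and $J(t)=_{LD}J(t')$, the latter meaning that the sequences $J(t)$ and $J(t')$ have equal lengths and pairwise $LD$-equivalent entries.
   Context: For $n\ge1$, $T_n^*$ (resp. $T_n^\circ$, $T_n^{*,\circ}$) is the set of terms built from variables $x_1,\dots,x_n$ using the binary operator $*$ (resp. $\circ$, resp. both); $T^*=\bigcup_n T_n^*$, $T^{*,\circ}=\bigcup_nT_n^{*,\circ}$, $x$ denotes $x_1$, and $T_1^\circ$ is the set of $\circ$-terms in $x$. $=_{LD}$ is the congruence on $T^*$ generated by all instances of $x*(y*z)=(x*y)*(x*z)$ (LD); $=_{ALD}$ is the congruence on $T^{*,\circ}$ generated by all instances of (LD), $x*(y*z)=(x\circ y)*z$ and $x*(y\circ z)=(x*y)\circ(x*z)$. For a set $S$ with binary operation $*$, $\widehat S$ denotes the finite nonempty sequences over $S$, $\frown$ concatenation, and $\vec s\mathbin{\vec{*}}\vec t=(s_1*\cdots*s_p*t_1,\dots,s_1*\cdots*s_p*t_q)$ ($p,q$ the lengths; parentheses added on the right). For $t\in T^{*,\circ}$, $I(t)\in T_1^\circ$ and $J(t)\in\widehat{T^*}$ are defined inductively: if $t$ is a variable, $(I(t),J(t))=(x,(t))$; if $t=t_1*t_2$, $(I(t),J(t))=(I(t_2),J(t_1)\mathbin{\vec{*}}J(t_2))$; if $t=t_1\circ t_2$, $(I(t),J(t))=(I(t_1)\circ I(t_2),J(t_1)\frown J(t_2))$. *)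

theory Defs
  imports Main
begin

text \<open>Terms over variables x_i (i :: nat) built with the binary operators * and \<circ>.
  The variable x = x_1 is represented as Var 1.\<close>
datatype trm = Var nat | Star trm trm | Circ trm trm

fun is_star :: "trm \<Rightarrow> bool" where
  "is_star (Var i) = True"
| "is_star (Star a b) = (is_star a \<and> is_star b)"
| "is_star (Circ a b) = False"

inductive ld_eq :: "trm \<Rightarrow> trm \<Rightarrow> bool" where
  ld_ax: "\<lbrakk>is_star x; is_star y; is_star z\<rbrakk> \<Longrightarrow>
            ld_eq (Star x (Star y z)) (Star (Star x y) (Star x z))"
| ld_refl: "is_star t \<Longrightarrow> ld_eq t t"
| ld_sym: "ld_eq s t \<Longrightarrow> ld_eq t s"
| ld_trans: "ld_eq s t \<Longrightarrow> ld_eq t u \<Longrightarrow> ld_eq s u"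
| ld_star: "ld_eq s s' \<Longrightarrow> ld_eq t t' \<Longrightarrow> ld_eq (Star s t) (Star s' t')"

inductive ald_eq :: "trm \<Rightarrow> trm \<Rightarrow> bool" where
  ald_ld: "ald_eq (Star x (Star y z)) (Star (Star x y) (Star x z))"
| ald_circ1: "ald_eq (Star x (Star y z)) (Star (Circ x y) z)"
| ald_circ2: "ald_eq (Star x (Circ y z)) (Circ (Star x y) (Star x z))"
| ald_refl: "ald_eq t t"
| ald_sym: "ald_eq s t \<Longrightarrow> ald_eq t s"
| ald_trans: "ald_eq s t \<Longrightarrow> ald_eq t u \<Longrightarrow> ald_eq s u"
| ald_star: "ald_eq s s' \<Longrightarrow> ald_eq t t' \<Longrightarrow> ald_eq (Star s t) (Star s' t')"
| ald_circ: "ald_eq s s' \<Longrightarrow> ald_eq t t' \<Longrightarrow> ald_eq (Circ s t) (Circ s' t')"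

fun rstar :: "trm list \<Rightarrow> trm \<Rightarrow> trm" where
  "rstar [] t = t"
| "rstar (s # ss) t = Star s (rstar ss t)"

definition vstar :: "trm list \<Rightarrow> trm list \<Rightarrow> trm list" where
  "vstar ss ts = map (rstar ss) ts"

fun I :: "trm \<Rightarrow> trm" where
  "I (Var i) = Var 1"
| "I (Star t1 t2) = I t2"
| "I (Circ t1 t2) = Circ (I t1) (I t2)"

fun J :: "trm \<Rightarrow> trm list" where
  "J (Var i) = [Var i]"
| "J (Star t1 t2) = vstar (J t1) (J t2)"
| "J (Circ t1 t2) = J t1 @ J t2"

end

theory Submission
  imports Defs
begin

text \<open>Both maps are checked on the generating instances of the three laws, the congruence
  rules then being immediate since \<open>vstar\<close> and \<open>@\<close> respect \<open>=\<^sub>L\<^sub>D\<close> entrywise. The two laws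
  involving \<open>\<circ>\<close> turn into exact identities: \<open>vstar\<close> is an action of the concatenation
  monoid on sequences (\<open>rstar (A @ B) = rstar A \<circ> rstar B\<close>) and distributes over
  concatenation. The law (LD) turns into the left self-distributivity of \<open>vstar\<close>, which holds
  up to \<open>=\<^sub>L\<^sub>D\<close> because each left translation \<open>rstar A\<close> is an endomorphism of \<open>*\<close> modulo LD.\<close>

declare ld_trans [trans]

lemma is_star_rstar: "\<forall>a\<in>set A. is_star a \<Longrightarrow> is_star c \<Longrightarrow> is_star (rstar A c)"
  by (induction A) auto

lemma is_star_J: "\<forall>a\<in>set (J t). is_star a"
  by (induction t) (auto simp: vstar_def is_star_rstar)

lemma rstar_append: "rstar (A @ B) c = rstar A (rstar B c)"
  by (induction A) auto

lemma ld_eq_rstar: "list_all2 ld_eq A A' \<Longrightarrow> ld_eq c c' \<Longrightarrow> ld_eq (rstar A c) (rstar A' c')"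
  by (induction rule: list_all2_induct) (auto intro: ld_star)

lemma ld_eq_rstar_Star:
  assumes "\<forall>a\<in>set A. is_star a" "is_star u" "is_star v"
  shows "ld_eq (rstar A (Star u v)) (Star (rstar A u) (rstar A v))"
  using assms
proof (induction A)
  case Nil
  then show ?case by (auto intro: ld_refl)
next
  case (Cons a A)
  then have "ld_eq (Star a (rstar A (Star u v))) (Star a (Star (rstar A u) (rstar A v)))"
    by (auto intro: ld_star ld_refl)
  also have "ld_eq \<dots> (Star (Star a (rstar A u)) (Star a (rstar A v)))"
    using Cons.prems by (auto intro!: ld_ax is_star_rstar)
  finally show ?case by simp
qed

lemma ld_eq_rstar_rstar:
  assumes "\<forall>a\<in>set A. is_star a" "\<forall>b\<in>set B. is_star b" "is_star c"
  shows "ld_eq (rstar A (rstar B c)) (rstar (map (rstar A) B) (rstar A c))"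
  using assms
proof (induction B)
  case Nil
  then show ?case by (auto intro: ld_refl is_star_rstar)
next
  case (Cons b B)
  then have "ld_eq (rstar A (Star b (rstar B c))) (Star (rstar A b) (rstar A (rstar B c)))"
    by (auto intro!: ld_eq_rstar_Star is_star_rstar)
  also have "ld_eq \<dots> (Star (rstar A b) (rstar (map (rstar A) B) (rstar A c)))"
    using Cons by (auto intro!: ld_star ld_refl is_star_rstar)
  finally show ?case by simp
qed

lemma vstar_vstar: "vstar A (vstar B C) = vstar (A @ B) C"
  by (simp add: vstar_def rstar_append)

lemma vstar_append: "vstar A (B @ C) = vstar A B @ vstar A C"
  by (simp add: vstar_def)

lemma ld_eq_vstar_self_distrib:
  assumes "\<forall>a\<in>set A. is_star a" "\<forall>b\<in>set B. is_star b" "\<forall>c\<in>set C. is_star c"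
  shows "list_all2 ld_eq (vstar A (vstar B C)) (vstar (vstar A B) (vstar A C))"
  using assms
  by (auto simp: vstar_def list_all2_map1 list_all2_map2 list_all2_same intro: ld_eq_rstar_rstar)

lemma ld_eq_vstar:
  "list_all2 ld_eq A A' \<Longrightarrow> list_all2 ld_eq B B' \<Longrightarrow> list_all2 ld_eq (vstar A B) (vstar A' B')"
  by (auto simp: vstar_def list_all2_map1 list_all2_map2 intro: list_all2_mono ld_eq_rstar)

lemma list_ld_eq_refl: "\<forall>a\<in>set A. is_star a \<Longrightarrow> list_all2 ld_eq A A"
  by (simp add: list_all2_same ld_refl)

lemma list_ld_eq_sym: "list_all2 ld_eq A B \<Longrightarrow> list_all2 ld_eq B A"
  by (induction rule: list_all2_induct) (auto intro: ld_sym)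

lemma list_ld_eq_trans: "list_all2 ld_eq A B \<Longrightarrow> list_all2 ld_eq B C \<Longrightarrow> list_all2 ld_eq A C"
  by (rule list_all2_trans[OF ld_trans])

theorem lemma1p9:
  assumes "ald_eq t t'"
  shows "I t = I t' \<and> list_all2 ld_eq (J t) (J t')"
  using assms
proof (induction rule: ald_eq.induct)
  case (ald_ld x y z)
  show ?case using is_star_J[of x] is_star_J[of y] is_star_J[of z]
    by (simp add: ld_eq_vstar_self_distrib)
next
  case (ald_circ1 x y z)
  show ?case using list_ld_eq_refl[OF is_star_J[of "Star (Circ x y) z"]]
    by (simp add: vstar_vstar)
next
  case (ald_circ2 x y z)
  show ?case using list_ld_eq_refl[OF is_star_J[of "Star x (Circ y z)"]]
    by (simp add: vstar_append)
next
  case (ald_refl t)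
  show ?case using is_star_J[of t] by (simp add: list_ld_eq_refl)
next
  case (ald_sym s t)
  then show ?case by (simp add: list_ld_eq_sym)
next
  case (ald_trans s t u)
  then show ?case by (metis list_ld_eq_trans)
next
  case (ald_star s s' t t')
  then show ?case by (simp add: ld_eq_vstar)
next
  case (ald_circ s s' t t')
  then show ?case by (simp add: list_all2_appendI)
qed

end
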